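(* Let $G$ and $H$ be graphs, each with at least two vertices. If there exist $r_1,r_2\in(0,1)$ with $r_1^2+r_2^2=1$ such that $G$ admits a spherical embedding of dimension $\operatorname{sdim}G$ and radius $r_1$ and $H$ admits a spherical embedding of dimension $\operatorname{sdim}H$ and radius $r_2$, then $\dim(G+H)=\operatorname{sdim}G+\operatorname{sdim}H$. Otherwise $\dim(G+H)>\operatorname{sdim}G+\operatorname{sdim}H$.
   Context: All graphs are finite and simple. A unit-distance embedding of a graph $G$ in $\mathbb{R}^n$ is an injective map $f$ from the vertex set of $G$ to $\mathbb{R}^n$ such that $|f(u)-f(v)|=1$ for every edge $uv$ and no point $f(w)$ lies on the segment $[f(u),f(v)]$ for an edge $uv$ with $w\notin\{u,v\}$ (edges may cross one another). The dimension $\dim G$ is the least natural number $n$ such that $G$ has a unit-distance embedding in $\mathbb{R}^n$. $G$ admits a spherical embedding of dimension $k$ and radius $r$ if $G$ has a unit-distance embedding in $\mathbb{R}^k$ all of whose vertices lie on a sphere $\{x\in\mathbb{R}^k:|x-c|=r\}$. The spherical dimension $\operatorname{sdim}G$ is the least $k$ such that $G$ admits a spherical embedding of dimension $k$ and some radius $r<1$ (by convention $\operatorname{sdim}$ of the graph with no vertices is $-\infty$ and $\operatorname{sdim}K_1=0$). The sum $G+H$ is obtained from disjoint copies of $G$ and $H$ by adding all edges between a vertex of $G$ and a vertex of $H$. *)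

theory Defs
  imports Main Complex_Main
begin

type_synonym 'a graph = "'a set \<times> 'a set set"

definition verts :: "'a graph \<Rightarrow> 'a set" where "verts G = fst G"
definition edges :: "'a graph \<Rightarrow> 'a set set" where "edges G = snd G"

definition simple_graph :: "'a graph \<Rightarrow> bool" where
  "simple_graph G \<longleftrightarrow> finite (verts G) \<and>
     (\<forall>e\<in>edges G. e \<subseteq> verts G \<and> card e = 2)"

text \<open>Euclidean space R^n represented as functions nat => real vanishing at indices >= n.\<close>

definition Rn :: "nat \<Rightarrow> (nat \<Rightarrow> real) set" where
  "Rn n = {x. \<forall>i\<ge>n. x i = 0}"

definition edist :: "nat \<Rightarrow> (nat \<Rightarrow> real) \<Rightarrow> (nat \<Rightarrow> real) \<Rightarrow> real" where
  "edist n x y = sqrt (\<Sum>i<n. (x i - y i)^2)"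

definition seg :: "(nat \<Rightarrow> real) \<Rightarrow> (nat \<Rightarrow> real) \<Rightarrow> (nat \<Rightarrow> real) set" where
  "seg x y = {z. \<exists>t. 0 \<le> t \<and> t \<le> 1 \<and> (\<forall>i. z i = (1 - t) * x i + t * y i)}"

definition unit_embedding :: "'a graph \<Rightarrow> nat \<Rightarrow> ('a \<Rightarrow> nat \<Rightarrow> real) \<Rightarrow> bool" where
  "unit_embedding G n f \<longleftrightarrow>
     f ` verts G \<subseteq> Rn n \<and> inj_on f (verts G) \<and>
     (\<forall>u v. {u, v} \<in> edges G \<longrightarrow> edist n (f u) (f v) = 1) \<and>
     (\<forall>u v w. {u, v} \<in> edges G \<longrightarrow> w \<in> verts G \<longrightarrow> w \<noteq> u \<longrightarrow> w \<noteq> v \<longrightarrow>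
        f w \<notin> seg (f u) (f v))"

definition graph_dim :: "'a graph \<Rightarrow> nat" where
  "graph_dim G = (LEAST n. \<exists>f. unit_embedding G n f)"

definition spherical_embedding :: "'a graph \<Rightarrow> nat \<Rightarrow> real \<Rightarrow> bool" where
  "spherical_embedding G k r \<longleftrightarrow>
     (\<exists>f c. unit_embedding G k f \<and> c \<in> Rn k \<and> (\<forall>v\<in>verts G. edist k (f v) c = r))"

text \<open>Spherical dimension (as a natural number; for graphs with at least one vertex;
the convention sdim of the empty graph = -infinity is not needed here).\<close>
definition sdim :: "'a graph \<Rightarrow> nat" where
  "sdim G = (LEAST k. \<exists>r<1. spherical_embedding G k r)"

definition graph_sum :: "'a graph \<Rightarrow> 'b graph \<Rightarrow> ('a + 'b) graph" where
  "graph_sum G H =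
     (Inl ` verts G \<union> Inr ` verts H,
      ((\<lambda>e. Inl ` e) ` edges G) \<union> ((\<lambda>e. Inr ` e) ` edges H) \<union>
      {{Inl u, Inr v} | u v. u \<in> verts G \<and> v \<in> verts H})"

end

theory Submission
  imports Defs "HOL-Library.Function_Algebras"
begin

text \<open>
  Let \<open>f\<close> be a unit-distance embedding of \<open>G + H\<close>. Every image point of \<open>G\<close> is at distance one
  from every image point of \<open>H\<close>, so by polarization the differences \<open>p - p'\<close> within \<open>G\<close> are
  orthogonal to the differences \<open>q - q'\<close> within \<open>H\<close>. Hence the two images lie in orthogonal
  affine subspaces of dimensions \<open>k\<^sub>1 + k\<^sub>2 \<le> n\<close> through a common point \<open>c\<close>, and by Pythagoras
  \<open>|p - c|\<^sup>2 + |q - c|\<^sup>2 = 1\<close> for all such \<open>p, q\<close>. So \<open>G\<close> and \<open>H\<close> get spherical embeddings of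
  dimensions \<open>k\<^sub>1, k\<^sub>2\<close> with radii \<open>r\<^sub>1, r\<^sub>2 \<in> (0,1)\<close>, \<open>r\<^sub>1\<^sup>2 + r\<^sub>2\<^sup>2 = 1\<close>, and \<open>k\<^sub>i \<ge> sdim\<close>.
  Conversely, two such spherical embeddings centred at the origin, placed in complementary
  blocks of coordinates, form a unit-distance embedding of \<open>G + H\<close> in dimension \<open>k\<^sub>1 + k\<^sub>2\<close>.
\<close>

section \<open>Inner products and orthonormal frames\<close>

definition dot :: "nat \<Rightarrow> (nat \<Rightarrow> real) \<Rightarrow> (nat \<Rightarrow> real) \<Rightarrow> real" where
  "dot n x y = (\<Sum>i<n. x i * y i)"

lemma dot_commute: "dot n x y = dot n y x"
  unfolding dot_def by (simp add: mult.commute)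

lemma dot_diff_left: "dot n (x - y) z = dot n x z - dot n y z"
  unfolding dot_def by (simp add: left_diff_distrib sum_subtractf)

lemma dot_diff_right: "dot n z (x - y) = dot n z x - dot n z y"
  unfolding dot_def by (simp add: right_diff_distrib sum_subtractf)

lemma dot_add_left: "dot n (x + y) z = dot n x z + dot n y z"
  unfolding dot_def by (simp add: distrib_right sum.distrib)

lemma dot_zero_left [simp]: "dot n 0 z = 0"
  unfolding dot_def by simp

lemma dot_affine_left:
  "dot n (\<lambda>i. a * x i + b * y i) z = a * dot n x z + b * dot n y z"
  unfolding dot_def by (simp add: distrib_right sum.distrib sum_distrib_left mult.assoc)

lemma dot_scale_left: "dot n (\<lambda>i. a * x i) z = a * dot n x z"
  using dot_affine_left[of n a x 0 x z] by simp

lemma dot_scale_right: "dot n z (\<lambda>i. a * x i) = a * dot n z x"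
  using dot_scale_left[of n a x z] by (simp add: dot_commute)

lemma dot_sum_left: "dot n (\<lambda>i. \<Sum>e\<in>E. a e * e i) z = (\<Sum>e\<in>E. a e * dot n e z)"
  unfolding dot_def by (simp add: sum_distrib_right sum_distrib_left mult.assoc sum.swap[of _ E])

lemma dot_self_nonneg: "0 \<le> dot n x x"
  unfolding dot_def by (simp add: sum_nonneg)

lemma dot_self_eq_0:
  assumes "x \<in> Rn n" and "dot n x x = 0"
  shows "x = 0"
proof
  fix i
  show "x i = 0 i"
  proof (cases "i < n")
    case True
    have "(\<Sum>j<n. x j * x j) = 0"
      using assms(2) unfolding dot_def .
    then have "x i * x i = 0"
      using True by (subst (asm) sum_nonneg_eq_0_iff) auto
    then show ?thesis by simp
  qed (use assms(1) in \<open>simp add: Rn_def\<close>)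
qed

lemma pythagoras_dot:
  "dot n x y = 0 \<Longrightarrow> dot n (x - y) (x - y) = dot n x x + dot n y y"
  by (simp add: dot_diff_left dot_diff_right dot_commute[of n y x])

lemma dot_diff_diff_polarization:
  "2 * dot n (q - q') (p - p') =
     dot n (q - p') (q - p') + dot n (q' - p) (q' - p) - dot n (q - p) (q - p) - dot n (q' - p') (q' - p')"
proof -
  have "2 * ((q i - q' i) * (p i - p' i)) =
      (q i - p' i) * (q i - p' i) + (q' i - p i) * (q' i - p i)
      - (q i - p i) * (q i - p i) - (q' i - p' i) * (q' i - p' i)" for i
    by (simp add: algebra_simps)
  then show ?thesis
    unfolding dot_def by (simp add: sum_distrib_left sum.distrib sum_subtractf)
qed

lemma Rn_diff: "x \<in> Rn n \<Longrightarrow> y \<in> Rn n \<Longrightarrow> x - y \<in> Rn n"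
  unfolding Rn_def by simp

lemma Rn_add: "x \<in> Rn n \<Longrightarrow> y \<in> Rn n \<Longrightarrow> x + y \<in> Rn n"
  unfolding Rn_def by simp

lemma zero_in_Rn [simp]: "0 \<in> Rn n"
  unfolding Rn_def by simp

lemma edist_eq_sqrt_dot: "edist n x y = sqrt (dot n (x - y) (x - y))"
  unfolding edist_def dot_def by (simp add: power2_eq_square)

lemma edist_sq: "(edist n x y)\<^sup>2 = dot n (x - y) (x - y)"
  by (simp add: edist_eq_sqrt_dot dot_self_nonneg)

lemma edist_nonneg: "0 \<le> edist n x y"
  by (simp add: edist_def sum_nonneg)

lemma edist_commute: "edist n x y = edist n y x"
  unfolding edist_def by (simp add: power2_commute)

lemma edist_self [simp]: "edist n x x = 0"
  unfolding edist_def by simp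

lemma edist_eq_0:
  assumes "x \<in> Rn n" and "y \<in> Rn n" and "edist n x y = 0"
  shows "x = y"
  using dot_self_eq_0[OF Rn_diff[OF assms(1,2)]] assms(3) by (simp add: edist_eq_sqrt_dot)

definition orthonormal :: "nat \<Rightarrow> (nat \<Rightarrow> real) set \<Rightarrow> bool" where
  "orthonormal n E \<longleftrightarrow> finite E \<and> E \<subseteq> Rn n \<and>
     (\<forall>e\<in>E. \<forall>e'\<in>E. dot n e e' = (if e = e' then 1 else 0))"

definition proj :: "nat \<Rightarrow> (nat \<Rightarrow> real) set \<Rightarrow> (nat \<Rightarrow> real) \<Rightarrow> (nat \<Rightarrow> real)" where
  "proj n E v = (\<lambda>i. \<Sum>e\<in>E. dot n v e * e i)"

lemma proj_in_Rn: "E \<subseteq> Rn n \<Longrightarrow> proj n E v \<in> Rn n"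
  unfolding proj_def Rn_def by (auto intro!: sum.neutral)

lemma dot_proj_left: "dot n (proj n E v) z = (\<Sum>e\<in>E. dot n v e * dot n e z)"
  unfolding proj_def by (rule dot_sum_left)

lemma dot_proj_eq_0: "(\<And>e. e \<in> E \<Longrightarrow> dot n e z = 0) \<Longrightarrow> dot n (proj n E v) z = 0"
  by (simp add: dot_proj_left)

lemma dot_proj_basis:
  assumes "orthonormal n E" and "e \<in> E"
  shows "dot n (proj n E v) e = dot n v e"
proof -
  have "dot n (proj n E v) e = (\<Sum>e'\<in>E. if e' = e then dot n v e else 0)"
    unfolding dot_proj_left using assms unfolding orthonormal_def by (intro sum.cong) auto
  also have "\<dots> = dot n v e"
    using assms unfolding orthonormal_def by simp
  finally show ?thesis .
qed

lemma proj_idem: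
  assumes "orthonormal n E"
  shows "proj n E (proj n E v) = proj n E v"
proof -
  have "proj n E (proj n E v) = (\<lambda>i. \<Sum>e\<in>E. dot n v e * e i)"
    unfolding proj_def[of n E "proj n E v"] using dot_proj_basis[OF assms]
    by (intro ext sum.cong) auto
  then show ?thesis by (simp add: proj_def)
qed

lemma proj_diff: "proj n E (x - y) = proj n E x - proj n E y"
  unfolding proj_def by (rule ext) (simp add: dot_diff_left left_diff_distrib sum_subtractf)

lemma proj_affine:
  "proj n E (\<lambda>i. a * x i + b * y i) = (\<lambda>i. a * proj n E x i + b * proj n E y i)"
  unfolding proj_def
  by (rule ext) (simp add: dot_affine_left distrib_right sum.distrib sum_distrib_left mult.assoc)

lemma proj_zero [simp]: "proj n E 0 = 0"
  unfolding proj_def by (rule ext) simp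

lemma dot_sub_proj_basis:
  "orthonormal n E \<Longrightarrow> e \<in> E \<Longrightarrow> dot n (v - proj n E v) e = 0"
  by (simp add: dot_diff_left dot_proj_basis)

lemma bessel_inequality:
  assumes "orthonormal n E"
  shows "(\<Sum>e\<in>E. (dot n v e)\<^sup>2) \<le> dot n v v"
proof -
  let ?p = "proj n E v"
  have pv: "dot n ?p v = (\<Sum>e\<in>E. (dot n v e)\<^sup>2)"
    unfolding dot_proj_left by (simp add: dot_commute[of n _ v] power2_eq_square)
  have pp: "dot n ?p ?p = (\<Sum>e\<in>E. (dot n v e)\<^sup>2)"
    unfolding dot_proj_left[of n E v ?p]
    using assms by (simp add: dot_commute[of n _ ?p] dot_proj_basis power2_eq_square)
  have "0 \<le> dot n (v - ?p) (v - ?p)" by (rule dot_self_nonneg)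
  also have "\<dots> = dot n v v - dot n ?p v - dot n v ?p + dot n ?p ?p"
    by (simp add: dot_diff_left dot_diff_right)
  finally show ?thesis using pv pp by (simp add: dot_commute[of n v ?p])
qed

lemma parseval_identity:
  assumes "proj n E v = v"
  shows "dot n v v = (\<Sum>e\<in>E. (dot n v e)\<^sup>2)"
proof -
  have "dot n (proj n E v) v = (\<Sum>e\<in>E. (dot n v e)\<^sup>2)"
    unfolding dot_proj_left by (simp add: dot_commute[of n _ v] power2_eq_square)
  with assms show ?thesis by simp
qed

lemma orthonormal_card_le:
  assumes "orthonormal n E"
  shows "card E \<le> n"
proof -
  have "real (card E) = (\<Sum>e\<in>E. dot n e e)"
    using assms unfolding orthonormal_def by simp
  also have "\<dots> = (\<Sum>i<n. \<Sum>e\<in>E. (e i)\<^sup>2)"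
    unfolding dot_def by (simp add: sum.swap[of _ E] power2_eq_square)
  also have "\<dots> \<le> (\<Sum>i<n. 1)"
  proof (rule sum_mono)
    fix i assume i: "i \<in> {..<n}"
    let ?\<delta> = "\<lambda>j. if j = i then 1 else (0::real)"
    have "\<And>e. dot n ?\<delta> e = e i" and "dot n ?\<delta> ?\<delta> = 1"
      unfolding dot_def using i by (simp_all add: if_distrib[of "\<lambda>a. a * _"] cong: if_cong)
    then show "(\<Sum>e\<in>E. (e i)\<^sup>2) \<le> 1"
      using bessel_inequality[OF assms, of ?\<delta>] by simp
  qed
  finally show ?thesis by simp
qed

lemma orthonormal_Un_card_le:
  assumes E: "orthonormal n E" and F: "orthonormal n F"
    and EF: "\<And>e f. e \<in> E \<Longrightarrow> f \<in> F \<Longrightarrow> dot n e f = 0"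
  shows "card E + card F \<le> n"
proof -
  have disjoint: "E \<inter> F = {}"
    using E EF unfolding orthonormal_def by force
  have "orthonormal n (E \<union> F)"
    unfolding orthonormal_def
  proof (intro conjI ballI)
    fix e e' assume "e \<in> E \<union> F" and "e' \<in> E \<union> F"
    then show "dot n e e' = (if e = e' then 1 else 0)"
      using E F EF[of e e'] EF[of e' e] disjoint dot_commute[of n e e']
      unfolding orthonormal_def by auto
  qed (use E F in \<open>auto simp: orthonormal_def\<close>)
  then have "card (E \<union> F) \<le> n" by (rule orthonormal_card_le)
  with disjoint E F show ?thesis
    unfolding orthonormal_def by (simp add: card_Un_disjoint)
qed

lemma proj_insert:
  assumes "finite E" and "u \<notin> E"
  shows "proj n (insert u E) v = proj n E v + (\<lambda>i. dot n v u * u i)"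
  unfolding proj_def using assms by (rule_tac ext) (simp add: add.commute)

lemma dot_sub_proj_right:
  assumes "\<And>e. e \<in> E \<Longrightarrow> dot n y e = 0"
  shows "dot n y (v - proj n E v) = dot n y v"
proof -
  have "dot n (proj n E v) y = 0"
    using assms by (intro dot_proj_eq_0) (simp add: dot_commute[of n _ y])
  then show ?thesis by (simp add: dot_diff_right dot_commute[of n y "proj n E v"])
qed

lemma proj_insert_perp:
  assumes "finite E" and "u \<notin> E" and "\<And>e. e \<in> E \<Longrightarrow> dot n e u = 0"
    and "proj n E x = x"
  shows "proj n (insert u E) x = x"
proof -
  have "dot n (proj n E x) u = 0" using assms(3) by (rule dot_proj_eq_0)
  with assms show ?thesis by (simp add: proj_insert zero_fun_def)
qed

lemma orthonormal_insert:
  assumes E: "orthonormal n E" and u: "u \<in> Rn n" and u_unit: "dot n u u = 1"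
    and u_perp: "\<And>e. e \<in> E \<Longrightarrow> dot n e u = 0"
  shows "orthonormal n (insert u E)" and "u \<notin> E"
proof -
  show u_notin: "u \<notin> E" using u_perp u_unit by force
  have "dot n e e' = (if e = e' then 1 else 0)" if "e \<in> insert u E" "e' \<in> insert u E" for e e'
    using that
  proof (elim insertE)
    assume "e = u" "e' = u"
    then show ?thesis using u_unit by simp
  next
    assume "e = u" "e' \<in> E"
    then show ?thesis using u_perp[of e'] u_notin by (auto simp: dot_commute[of n u e'])
  next
    assume "e \<in> E" "e' = u"
    then show ?thesis using u_perp[of e] u_notin by auto
  next
    assume "e \<in> E" "e' \<in> E"
    then show ?thesis using E by (simp add: orthonormal_def)
  qed
  with E u show "orthonormal n (insert u E)" by (simp add: orthonormal_def)
qed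

lemma gram_schmidt_step:
  assumes E: "orthonormal n E" and s: "s \<in> Rn n"
  shows "\<exists>E'. orthonormal n E' \<and> proj n E' s = s \<and>
     (\<forall>x. proj n E x = x \<longrightarrow> proj n E' x = x) \<and>
     (\<forall>y. dot n y s = 0 \<and> (\<forall>e\<in>E. dot n y e = 0) \<longrightarrow> (\<forall>e\<in>E'. dot n y e = 0))"
proof -
  define w where "w = s - proj n E s"
  have w_Rn: "w \<in> Rn n"
    using E s unfolding w_def orthonormal_def by (blast intro: Rn_diff proj_in_Rn)
  have w_perp: "dot n w e = 0" if "e \<in> E" for e
    unfolding w_def using E that by (rule dot_sub_proj_basis)
  have w_perp_y: "dot n y w = 0" if "dot n y s = 0" and "\<forall>e\<in>E. dot n y e = 0" for y
    using that dot_sub_proj_right[of E n y s] by (simp add: w_def)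
  show ?thesis
  proof (cases "dot n w w = 0")
    case True
    then have "w = 0" using dot_self_eq_0 w_Rn by blast
    then have "proj n E s = s" by (simp add: w_def)
    with E show ?thesis by (intro exI[of _ E]) auto
  next
    case False
    define a where "a = 1 / sqrt (dot n w w)"
    define u where "u = (\<lambda>i. a * w i)"
    have a_sq: "a * a * dot n w w = 1"
      using False dot_self_nonneg[of n w] by (simp add: a_def)
    have u_unit: "dot n u u = 1"
      using a_sq by (simp add: u_def dot_scale_left dot_scale_right)
    have u_perp: "dot n e u = 0" if "e \<in> E" for e
      using w_perp[OF that] by (simp add: u_def dot_scale_right dot_commute[of n e w])
    have "u \<in> Rn n" using w_Rn by (simp add: u_def Rn_def)
    have E': "orthonormal n (insert u E)" and u_notin: "u \<notin> E"
      using orthonormal_insert[OF E \<open>u \<in> Rn n\<close> u_unit] u_perp by blast+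
    have finE: "finite E" using E by (simp add: orthonormal_def)
    have "dot n s u = a * dot n w w"
    proof -
      have "dot n (proj n E s) u = 0" using u_perp by (rule dot_proj_eq_0)
      then have "dot n s u = dot n w u"
        by (simp add: w_def dot_diff_left)
      then show ?thesis by (simp add: u_def dot_scale_right)
    qed
    then have "(\<lambda>i. dot n s u * u i) = w"
      using a_sq by (intro ext) (simp add: u_def algebra_simps)
    then have "proj n (insert u E) s = s"
      by (simp add: proj_insert[OF finE u_notin] w_def)
    moreover have "proj n (insert u E) x = x" if "proj n E x = x" for x
      using proj_insert_perp[OF finE u_notin u_perp that] .
    moreover have "dot n y u = 0" if "dot n y s = 0" and "\<forall>e\<in>E. dot n y e = 0" for y
      using w_perp_y[OF that] by (simp add: u_def dot_scale_right)
    ultimately show ?thesis using E' by blast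
  qed
qed

text \<open>Gram--Schmidt; the last clause says that \<open>E\<close> lies in the span of \<open>S\<close>.\<close>
lemma gram_schmidt:
  assumes "finite S" and "S \<subseteq> Rn n"
  shows "\<exists>E. orthonormal n E \<and> (\<forall>s\<in>S. proj n E s = s) \<and>
     (\<forall>y. (\<forall>s\<in>S. dot n y s = 0) \<longrightarrow> (\<forall>e\<in>E. dot n y e = 0))"
  using assms
proof (induction S rule: finite_induct)
  case empty
  show ?case by (rule exI[of _ "{}"]) (simp add: orthonormal_def)
next
  case (insert s S)
  then obtain E where E: "orthonormal n E" and fix_S: "\<forall>s\<in>S. proj n E s = s"
    and perp_S: "\<forall>y. (\<forall>s\<in>S. dot n y s = 0) \<longrightarrow> (\<forall>e\<in>E. dot n y e = 0)"
    by auto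
  obtain E' where "orthonormal n E'" and "proj n E' s = s"
    and "\<forall>x. proj n E x = x \<longrightarrow> proj n E' x = x"
    and "\<forall>y. dot n y s = 0 \<and> (\<forall>e\<in>E. dot n y e = 0) \<longrightarrow> (\<forall>e\<in>E'. dot n y e = 0)"
    using gram_schmidt_step[OF E] insert.prems by blast
  with fix_S perp_S show ?case
    by (intro exI[of _ E']) blast
qed

lemma orthonormal_frame:
  assumes "finite P" and "P \<subseteq> Rn n" and "c \<in> Rn n"
  obtains E where "orthonormal n E" and "\<And>p. p \<in> P \<Longrightarrow> proj n E (p - c) = p - c"
    and "\<And>y e. (\<And>p. p \<in> P \<Longrightarrow> dot n y (p - c) = 0) \<Longrightarrow> e \<in> E \<Longrightarrow> dot n y e = 0"
proof -
  have "finite ((\<lambda>p. p - c) ` P)" and "(\<lambda>p. p - c) ` P \<subseteq> Rn n"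
    using assms by (auto intro: Rn_diff)
  from gram_schmidt[OF this] obtain E where E: "orthonormal n E"
    and fixed: "\<forall>s\<in>(\<lambda>p. p - c) ` P. proj n E s = s"
    and orth: "\<forall>y. (\<forall>s\<in>(\<lambda>p. p - c) ` P. dot n y s = 0) \<longrightarrow> (\<forall>e\<in>E. dot n y e = 0)"
    by blast
  from fixed have "\<And>p. p \<in> P \<Longrightarrow> proj n E (p - c) = p - c" by simp
  moreover from orth
  have "\<And>y e. (\<And>p. p \<in> P \<Longrightarrow> dot n y (p - c) = 0) \<Longrightarrow> e \<in> E \<Longrightarrow> dot n y e = 0"
    by simp
  ultimately show ?thesis using E that by blast
qed

lemma dot_proj_perp:
  assumes "proj n E x = x" and "\<And>e. e \<in> E \<Longrightarrow> dot n e y = 0"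
  shows "dot n x y = 0"
  using dot_proj_eq_0[OF assms(2)] assms(1) by metis

lemma pythagoras_orthogonal_spans:
  assumes x: "proj n E x = x" and y: "proj n F y = y"
    and EF: "\<And>e f. e \<in> E \<Longrightarrow> f \<in> F \<Longrightarrow> dot n e f = 0"
  shows "dot n (x - y) (x - y) = dot n x x + dot n y y"
proof (rule pythagoras_dot, rule dot_proj_perp[OF x])
  fix e assume "e \<in> E"
  have "dot n y e = 0"
    using EF[OF \<open>e \<in> E\<close>] by (intro dot_proj_perp[OF y]) (metis dot_commute)
  then show "dot n e y = 0" by (simp add: dot_commute)
qed

section \<open>Point sets at mutual distance one\<close>

lemma dot_diffs_unit_distance:
  assumes "edist n p q = 1" and "edist n p' q = 1" and "edist n p q' = 1" and "edist n p' q' = 1"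
  shows "dot n (q - q') (p - p') = 0"
  using dot_diff_diff_polarization[of n q q' p p'] assms
    edist_sq[of n q p] edist_sq[of n q' p] edist_sq[of n q p'] edist_sq[of n q' p']
  by (simp add: edist_commute[of n _ p] edist_commute[of n _ p'])

text \<open>The common point \<open>c\<close> is the foot of the perpendicular from \<open>q0\<close> to the affine hull
  of \<open>P\<close>; polarization makes every \<open>q - c\<close> orthogonal to that hull.\<close>
lemma unit_distance_frames:
  assumes "finite P" and "finite Q" and "P \<subseteq> Rn n" and "Q \<subseteq> Rn n"
    and "p0 \<in> P" and "q0 \<in> Q"
    and unit: "\<And>p q. p \<in> P \<Longrightarrow> q \<in> Q \<Longrightarrow> edist n p q = 1"
  obtains c E F where "c \<in> Rn n" and "orthonormal n E" and "orthonormal n F"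
    and "\<And>e f. e \<in> E \<Longrightarrow> f \<in> F \<Longrightarrow> dot n e f = 0"
    and "\<And>p. p \<in> P \<Longrightarrow> proj n E (p - c) = p - c"
    and "\<And>q. q \<in> Q \<Longrightarrow> proj n F (q - c) = q - c"
proof -
  obtain E where E: "orthonormal n E" and fix_P: "\<And>p. p \<in> P \<Longrightarrow> proj n E (p - p0) = p - p0"
    and perp_E: "\<And>y e. (\<And>p. p \<in> P \<Longrightarrow> dot n y (p - p0) = 0) \<Longrightarrow> e \<in> E \<Longrightarrow> dot n y e = 0"
    using orthonormal_frame[OF assms(1,3)] assms(3,5) by blast
  define c where "c = p0 + proj n E (q0 - p0)"
  have c: "c \<in> Rn n"
    unfolding c_def using E assms(3,5) by (auto intro!: Rn_add proj_in_Rn simp: orthonormal_def)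
  have P_frame: "proj n E (p - c) = p - c" if "p \<in> P" for p
  proof -
    have "p - c = (p - p0) - proj n E (q0 - p0)" by (simp add: c_def algebra_simps)
    with fix_P that show ?thesis by (simp only: proj_diff proj_idem[OF E])
  qed
  have Q_perp: "dot n (q - c) e = 0" if "q \<in> Q" and "e \<in> E" for q e
  proof -
    have "dot n (q - q0) (p - p0) = 0" if "p \<in> P" for p
      using that \<open>q \<in> Q\<close> assms(5,6) unit by (simp add: dot_diffs_unit_distance)
    then have "dot n (q - q0) e = 0" using perp_E \<open>e \<in> E\<close> by blast
    moreover have "q - c = (q - q0) + ((q0 - p0) - proj n E (q0 - p0))"
      by (simp add: c_def algebra_simps)
    then have "dot n (q - c) e = dot n (q - q0) e + dot n ((q0 - p0) - proj n E (q0 - p0)) e"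
      by (simp only: dot_add_left)
    ultimately show ?thesis
      using dot_sub_proj_basis[OF E \<open>e \<in> E\<close>] by simp
  qed
  obtain F where F: "orthonormal n F" and fix_Q: "\<And>q. q \<in> Q \<Longrightarrow> proj n F (q - c) = q - c"
    and perp_F: "\<And>y f. (\<And>q. q \<in> Q \<Longrightarrow> dot n y (q - c) = 0) \<Longrightarrow> f \<in> F \<Longrightarrow> dot n y f = 0"
    using orthonormal_frame[OF assms(2,4) c] by blast
  have EF: "dot n e f = 0" if "e \<in> E" and "f \<in> F" for e f
    using Q_perp perp_F that by (metis dot_commute)
  show ?thesis by (rule that[OF c E F EF P_frame fix_Q])
qed

lemma unit_distance_spheres:
  assumes "finite P" and "finite Q" and "P \<subseteq> Rn n" and "Q \<subseteq> Rn n"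
    and p0: "p0 \<in> P" and q0: "q0 \<in> Q"
    and unit: "\<And>p q. p \<in> P \<Longrightarrow> q \<in> Q \<Longrightarrow> edist n p q = 1"
  obtains c E F r1 r2 where "c \<in> Rn n" and "orthonormal n E" and "orthonormal n F"
    and "\<And>e f. e \<in> E \<Longrightarrow> f \<in> F \<Longrightarrow> dot n e f = 0"
    and "\<And>p. p \<in> P \<Longrightarrow> proj n E (p - c) = p - c"
    and "\<And>q. q \<in> Q \<Longrightarrow> proj n F (q - c) = q - c"
    and "\<And>p. p \<in> P \<Longrightarrow> edist n p c = r1" and "\<And>q. q \<in> Q \<Longrightarrow> edist n q c = r2"
    and "r1\<^sup>2 + r2\<^sup>2 = 1"
proof -
  obtain c E F where c: "c \<in> Rn n" and E: "orthonormal n E" and F: "orthonormal n F"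
    and EF: "\<And>e f. e \<in> E \<Longrightarrow> f \<in> F \<Longrightarrow> dot n e f = 0"
    and frame_P: "\<And>p. p \<in> P \<Longrightarrow> proj n E (p - c) = p - c"
    and frame_Q: "\<And>q. q \<in> Q \<Longrightarrow> proj n F (q - c) = q - c"
    using unit_distance_frames[OF assms] by blast
  have pythagoras: "(edist n p c)\<^sup>2 + (edist n q c)\<^sup>2 = 1" if p: "p \<in> P" and q: "q \<in> Q" for p q
  proof -
    have "p - q = (p - c) - (q - c)" by simp
    then have "(edist n p q)\<^sup>2 = dot n (p - c) (p - c) + dot n (q - c) (q - c)"
      using pythagoras_orthogonal_spans[OF frame_P[OF p] frame_Q[OF q]] EF
      by (simp add: edist_sq)
    with unit[OF p q] show ?thesis by (simp add: edist_sq)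
  qed
  have radius_P: "edist n p c = edist n p0 c" if "p \<in> P" for p
  proof -
    have "(edist n p c)\<^sup>2 = (edist n p0 c)\<^sup>2"
      using pythagoras[OF that q0] pythagoras[OF p0 q0] by simp
    then show ?thesis
      using edist_nonneg[of n p c] edist_nonneg[of n p0 c] by (simp add: power2_eq_iff_nonneg)
  qed
  have radius_Q: "edist n q c = edist n q0 c" if "q \<in> Q" for q
  proof -
    have "(edist n q c)\<^sup>2 = (edist n q0 c)\<^sup>2"
      using pythagoras[OF p0 that] pythagoras[OF p0 q0] by simp
    then show ?thesis
      using edist_nonneg[of n q c] edist_nonneg[of n q0 c] by (simp add: power2_eq_iff_nonneg)
  qed
  show ?thesis
    by (rule that[OF c E F EF frame_P frame_Q radius_P radius_Q pythagoras[OF p0 q0]])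
qed

section \<open>Transporting unit-distance embeddings\<close>

lemma seg_iff: "z \<in> seg x y \<longleftrightarrow> (\<exists>t. 0 \<le> t \<and> t \<le> 1 \<and> z = (\<lambda>i. (1 - t) * x i + t * y i))"
  unfolding seg_def by (simp add: fun_eq_iff)

lemma seg_commute: "seg x y = seg y x"
proof -
  have "z \<in> seg y x" if "z \<in> seg x y" for x y z
    using that unfolding seg_def
  proof (elim CollectE exE conjE, intro CollectI)
    fix t assume "0 \<le> t" "t \<le> 1" "\<forall>i. z i = (1 - t) * x i + t * y i"
    then show "\<exists>t. 0 \<le> t \<and> t \<le> 1 \<and> (\<forall>i. z i = (1 - t) * y i + t * x i)"
      by (intro exI[of _ "1 - t"]) (auto simp: algebra_simps)
  qed
  then show ?thesis by blast
qed

lemma affine_comb_minus: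
  fixes x y c :: "nat \<Rightarrow> real"
  shows "(\<lambda>i. (1 - t) * x i + t * y i) - c = (\<lambda>i. (1 - t) * (x - c) i + t * (y - c) i)"
  by (rule ext) (simp add: algebra_simps)

lemma edge_in_verts: "simple_graph G \<Longrightarrow> {u, v} \<in> edges G \<Longrightarrow> u \<in> verts G \<and> v \<in> verts G"
  unfolding simple_graph_def by blast

lemma unit_embedding_in_Rn: "unit_embedding G n f \<Longrightarrow> v \<in> verts G \<Longrightarrow> f v \<in> Rn n"
  unfolding unit_embedding_def by blast

lemma unit_embedding_isometry:
  assumes G: "simple_graph G" and g: "unit_embedding G n g"
    and A: "g ` verts G \<subseteq> A" "A \<subseteq> Rn n"
    and A_convex: "\<And>x y t. x \<in> A \<Longrightarrow> y \<in> A \<Longrightarrow> (\<lambda>i. (1 - t) * x i + t * y i) \<in> A"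
    and \<phi>_Rn: "\<phi> ` A \<subseteq> Rn m"
    and \<phi>_isometric: "\<And>x y. x \<in> A \<Longrightarrow> y \<in> A \<Longrightarrow> edist m (\<phi> x) (\<phi> y) = edist n x y"
    and \<phi>_affine: "\<And>x y t. \<phi> (\<lambda>i. (1 - t) * x i + t * y i) = (\<lambda>i. (1 - t) * \<phi> x i + t * \<phi> y i)"
  shows "unit_embedding G m (\<phi> \<circ> g)"
proof -
  have \<phi>_inj: "x = y" if "x \<in> A" "y \<in> A" "\<phi> x = \<phi> y" for x y
    using edist_eq_0[of x n y] \<phi>_isometric[of x y] that A(2) by auto
  have g_A: "g v \<in> A" if "v \<in> verts G" for v using A(1) that by blast
  show ?thesis
    unfolding unit_embedding_def
  proof (intro conjI allI impI)
    show "(\<phi> \<circ> g) ` verts G \<subseteq> Rn m" using \<phi>_Rn A(1) by auto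
    show "inj_on (\<phi> \<circ> g) (verts G)"
      using g \<phi>_inj g_A unfolding unit_embedding_def inj_on_def by auto
    fix u v assume uv: "{u, v} \<in> edges G"
    then show "edist m ((\<phi> \<circ> g) u) ((\<phi> \<circ> g) v) = 1"
      using g \<phi>_isometric g_A edge_in_verts[OF G uv] unfolding unit_embedding_def by simp
    fix w assume w: "w \<in> verts G" "w \<noteq> u" "w \<noteq> v"
    show "(\<phi> \<circ> g) w \<notin> seg ((\<phi> \<circ> g) u) ((\<phi> \<circ> g) v)"
    proof
      assume "(\<phi> \<circ> g) w \<in> seg ((\<phi> \<circ> g) u) ((\<phi> \<circ> g) v)"
      then obtain t where t: "0 \<le> t" "t \<le> 1"
        and "\<phi> (g w) = \<phi> (\<lambda>i. (1 - t) * g u i + t * g v i)"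
        unfolding seg_iff \<phi>_affine by auto
      moreover have "(\<lambda>i. (1 - t) * g u i + t * g v i) \<in> A"
        using edge_in_verts[OF G uv] by (intro A_convex g_A) auto
      ultimately have "g w = (\<lambda>i. (1 - t) * g u i + t * g v i)"
        using \<phi>_inj g_A w(1) by simp
      with t have "g w \<in> seg (g u) (g v)" unfolding seg_iff by blast
      with g uv w show False unfolding unit_embedding_def by blast
    qed
  qed
qed

lemma spherical_embedding_in_frame:
  assumes G: "simple_graph G" and g: "unit_embedding G n g"
    and c: "c \<in> Rn n" and E: "orthonormal n E"
    and in_frame: "\<And>v. v \<in> verts G \<Longrightarrow> proj n E (g v - c) = g v - c"
    and radius: "\<And>v. v \<in> verts G \<Longrightarrow> edist n (g v) c = r"
  shows "spherical_embedding G (card E) r"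
proof -
  let ?k = "card E"
  obtain h where h: "bij_betw h {..<?k} E"
    using E ex_bij_betw_nat_finite[of E] unfolding orthonormal_def lessThan_atLeast0 by blast
  define \<phi> where "\<phi> x = (\<lambda>i. if i < ?k then dot n (x - c) (h i) else 0)" for x
  define A where "A = {x \<in> Rn n. proj n E (x - c) = x - c}"
  have "edist ?k (\<phi> x) (\<phi> y) = edist n x y" if "x \<in> A" "y \<in> A" for x y
  proof -
    have "proj n E (x - y) = proj n E ((x - c) - (y - c))" by simp
    also have "\<dots> = proj n E (x - c) - proj n E (y - c)" by (rule proj_diff)
    also have "\<dots> = x - y" using that by (simp add: A_def)
    finally have "dot n (x - y) (x - y) = (\<Sum>e\<in>E. (dot n (x - y) e)\<^sup>2)"
      by (rule parseval_identity)
    also have "\<dots> = (\<Sum>i<?k. (dot n (x - y) (h i))\<^sup>2)"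
      using sum.reindex_bij_betw[OF h, of "\<lambda>e. (dot n (x - y) e)\<^sup>2"] by simp
    also have "\<dots> = (\<Sum>i<?k. (\<phi> x i - \<phi> y i)\<^sup>2)"
      unfolding \<phi>_def by (simp add: dot_diff_left)
    finally show ?thesis unfolding edist_def[of ?k] edist_eq_sqrt_dot[of n] by simp
  qed
  moreover have "\<phi> (\<lambda>i. (1 - t) * x i + t * y i) = (\<lambda>i. (1 - t) * \<phi> x i + t * \<phi> y i)" for x y t
    unfolding \<phi>_def affine_comb_minus dot_affine_left by (simp add: fun_eq_iff)
  moreover have "(\<lambda>i. (1 - t) * x i + t * y i) \<in> A" if "x \<in> A" "y \<in> A" for x y t
  proof -
    have "proj n E ((\<lambda>i. (1 - t) * x i + t * y i) - c) = (\<lambda>i. (1 - t) * x i + t * y i) - c"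
      unfolding affine_comb_minus proj_affine[of n E "1 - t" "x - c" t "y - c"]
      using that by (simp add: A_def)
    with that show ?thesis by (simp add: A_def Rn_def)
  qed
  moreover have "\<phi> ` A \<subseteq> Rn ?k" by (auto simp: \<phi>_def Rn_def)
  moreover have "g ` verts G \<subseteq> A"
    using g in_frame unfolding unit_embedding_def A_def by auto
  moreover have "c \<in> A" using c by (simp add: A_def)
  ultimately have "unit_embedding G ?k (\<phi> \<circ> g)" and "\<phi> c \<in> Rn ?k"
    and "\<forall>v\<in>verts G. edist ?k ((\<phi> \<circ> g) v) (\<phi> c) = r"
    using unit_embedding_isometry[OF G g, of A] radius by (auto simp: A_def)
  then show ?thesis unfolding spherical_embedding_def by blast
qed

section \<open>Splitting an embedding of a sum of graphs\<close>

lemma verts_graph_sum: "verts (graph_sum G H) = Inl ` verts G \<union> Inr ` verts H"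
  unfolding graph_sum_def verts_def by simp

lemma edges_graph_sum:
  "edges (graph_sum G H) = ((\<lambda>e. Inl ` e) ` edges G) \<union> ((\<lambda>e. Inr ` e) ` edges H) \<union>
     {{Inl u, Inr v} | u v. u \<in> verts G \<and> v \<in> verts H}"
  unfolding graph_sum_def edges_def by simp

lemma simple_graph_graph_sum:
  assumes G: "simple_graph G" and H: "simple_graph H"
  shows "simple_graph (graph_sum G H)"
proof -
  have "e \<subseteq> verts (graph_sum G H) \<and> card e = 2" if e: "e \<in> edges (graph_sum G H)" for e
  proof -
    consider (left) e' where "e' \<in> edges G" "e = Inl ` e'"
      | (right) e' where "e' \<in> edges H" "e = Inr ` e'"
      | (cross) u v where "u \<in> verts G" "v \<in> verts H" "e = {Inl u, Inr v}"
      using e unfolding edges_graph_sum by blast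
    then show ?thesis
    proof cases
      case left
      with G show ?thesis by (auto simp: simple_graph_def verts_graph_sum card_image)
    next
      case right
      with H show ?thesis by (auto simp: simple_graph_def verts_graph_sum card_image)
    next
      case cross
      then show ?thesis by (auto simp: verts_graph_sum)
    qed
  qed
  with G H show ?thesis by (auto simp: simple_graph_def verts_graph_sum)
qed

lemma graph_sum_edgeE:
  assumes G: "simple_graph G" and H: "simple_graph H"
    and uv: "{u, v} \<in> edges (graph_sum G H)"
  obtains (left) a b where "u = Inl a" "v = Inl b" "{a, b} \<in> edges G"
    | (right) a b where "u = Inr a" "v = Inr b" "{a, b} \<in> edges H"
    | (cross) a b where "a \<in> verts G" "b \<in> verts H" "{u, v} = {Inl a, Inr b}"
proof -
  have two: "\<exists>a b. e = {a, b}" if "simple_graph K" "e \<in> edges K" for K :: "'c graph" and e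
    using that unfolding simple_graph_def by (metis card_2_iff)
  consider (l) e where "e \<in> edges G" "{u, v} = Inl ` e"
    | (r) e where "e \<in> edges H" "{u, v} = Inr ` e"
    | (c) a b where "a \<in> verts G" "b \<in> verts H" "{u, v} = {Inl a, Inr b}"
    using uv unfolding edges_graph_sum by blast
  then show ?thesis
  proof cases
    case l
    with two[OF G] obtain a b where "e = {a, b}" by blast
    with l show ?thesis
      using left[of a b] left[of b a] by (auto simp: doubleton_eq_iff insert_commute)
  next
    case r
    with two[OF H] obtain a b where "e = {a, b}" by blast
    with r show ?thesis
      using right[of a b] right[of b a] by (auto simp: doubleton_eq_iff insert_commute)
  next
    case c
    then show ?thesis by (rule cross)
  qed
qed

lemma unit_embedding_subgraph:
  assumes f: "unit_embedding S n f" and \<iota>: "inj \<iota>" and V: "\<iota> ` verts G \<subseteq> verts S"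
    and E: "\<And>e. e \<in> edges G \<Longrightarrow> \<iota> ` e \<in> edges S"
  shows "unit_embedding G n (f \<circ> \<iota>)"
  unfolding unit_embedding_def
proof (intro conjI allI impI)
  show "(f \<circ> \<iota>) ` verts G \<subseteq> Rn n"
    using f V unfolding unit_embedding_def by auto
  have "inj_on f (\<iota> ` verts G)"
    using f V unfolding unit_embedding_def by (blast intro: inj_on_subset)
  then show "inj_on (f \<circ> \<iota>) (verts G)"
    using \<iota> by (blast intro: comp_inj_on inj_on_subset)
  fix u v assume "{u, v} \<in> edges G"
  then have S_edge: "{\<iota> u, \<iota> v} \<in> edges S" using E by force
  then show "edist n ((f \<circ> \<iota>) u) ((f \<circ> \<iota>) v) = 1"
    using f unfolding unit_embedding_def by simp
  fix w assume "w \<in> verts G" "w \<noteq> u" "w \<noteq> v"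
  then have "\<iota> w \<in> verts S" "\<iota> w \<noteq> \<iota> u" "\<iota> w \<noteq> \<iota> v"
    using V \<iota> by (auto simp: inj_eq)
  with S_edge f show "(f \<circ> \<iota>) w \<notin> seg ((f \<circ> \<iota>) u) ((f \<circ> \<iota>) v)"
    unfolding unit_embedding_def by simp
qed

lemma unit_embedding_graph_sum_Inl:
  "unit_embedding (graph_sum G H) n f \<Longrightarrow> unit_embedding G n (f \<circ> Inl)"
  by (rule unit_embedding_subgraph) (auto simp: verts_graph_sum edges_graph_sum)

lemma unit_embedding_graph_sum_Inr:
  "unit_embedding (graph_sum G H) n f \<Longrightarrow> unit_embedding H n (f \<circ> Inr)"
  by (rule unit_embedding_subgraph) (auto simp: verts_graph_sum edges_graph_sum)

lemma sphere_radius_pos: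
  assumes g: "unit_embedding G n g" and two: "card (verts G) \<ge> 2" and c: "c \<in> Rn n"
    and radius: "\<And>v. v \<in> verts G \<Longrightarrow> edist n (g v) c = r"
  shows "0 < r"
proof (rule ccontr)
  assume "\<not> 0 < r"
  moreover obtain v where "v \<in> verts G" using two by fastforce
  ultimately have "r = 0" using radius edist_nonneg[of n "g v" c] by simp
  with g c radius have "g ` verts G \<subseteq> {c}"
    unfolding unit_embedding_def by (blast intro: edist_eq_0)
  with g have "card (verts G) \<le> card {c}"
    unfolding unit_embedding_def by (intro card_inj_on_le) auto
  with two show False by simp
qed

lemma lt_1_if_sum_squares_eq_1:
  fixes a b :: real
  assumes "a\<^sup>2 + b\<^sup>2 = 1" and "0 < b"
  shows "a < 1"
proof -
  have "0 < b\<^sup>2" using assms(2) by simp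
  with assms(1) have "a\<^sup>2 < 1" by linarith
  then have "\<bar>a\<bar> < 1" by (simp only: abs_square_less_1)
  then show ?thesis by simp
qed

lemma unit_embedding_graph_sum_cross:
  assumes "unit_embedding (graph_sum G H) n f" and "u \<in> verts G" and "v \<in> verts H"
  shows "edist n (f (Inl u)) (f (Inr v)) = 1"
proof -
  have "{Inl u, Inr v} \<in> edges (graph_sum G H)"
    using assms(2,3) by (auto simp: edges_graph_sum)
  with assms(1) show ?thesis unfolding unit_embedding_def by blast
qed

lemma graph_sum_embedding_splits:
  assumes G: "simple_graph G" and H: "simple_graph H"
    and two_G: "card (verts G) \<ge> 2" and two_H: "card (verts H) \<ge> 2"
    and f: "unit_embedding (graph_sum G H) n f"
  shows "\<exists>k1 k2 r1 r2. k1 + k2 \<le> n \<and> 0 < r1 \<and> r1 < 1 \<and> 0 < r2 \<and> r2 < 1 \<and>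
     r1\<^sup>2 + r2\<^sup>2 = 1 \<and> spherical_embedding G k1 r1 \<and> spherical_embedding H k2 r2"
proof -
  define g where "g = f \<circ> Inl"
  define h where "h = f \<circ> Inr"
  have g: "unit_embedding G n g" and h: "unit_embedding H n h"
    unfolding g_def h_def using f
    by (rule unit_embedding_graph_sum_Inl, rule unit_embedding_graph_sum_Inr)
  have cross: "edist n p q = 1" if "p \<in> g ` verts G" and "q \<in> h ` verts H" for p q
    using that unit_embedding_graph_sum_cross[OF f] unfolding g_def h_def by auto
  obtain u0 v0 where u0: "u0 \<in> verts G" and v0: "v0 \<in> verts H"
    using two_G two_H by fastforce
  have fin: "finite (g ` verts G)" "finite (h ` verts H)"
    using G H by (simp_all add: simple_graph_def)
  have in_Rn: "g ` verts G \<subseteq> Rn n" "h ` verts H \<subseteq> Rn n"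
    using g h by (simp_all add: unit_embedding_def)
  obtain c E F r1 r2 where c: "c \<in> Rn n" and E: "orthonormal n E" and F: "orthonormal n F"
    and EF: "\<And>e f. e \<in> E \<Longrightarrow> f \<in> F \<Longrightarrow> dot n e f = 0"
    and frames: "\<And>p. p \<in> g ` verts G \<Longrightarrow> proj n E (p - c) = p - c"
      "\<And>q. q \<in> h ` verts H \<Longrightarrow> proj n F (q - c) = q - c"
    and radii: "\<And>p. p \<in> g ` verts G \<Longrightarrow> edist n p c = r1"
      "\<And>q. q \<in> h ` verts H \<Longrightarrow> edist n q c = r2"
    and r12: "r1\<^sup>2 + r2\<^sup>2 = 1"
    using unit_distance_spheres[OF fin in_Rn imageI[OF u0] imageI[OF v0] cross] by blast
  have frame_G: "proj n E (g u - c) = g u - c" and radius_G: "edist n (g u) c = r1"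
    if "u \<in> verts G" for u
    using frames(1) radii(1) that by blast+
  have frame_H: "proj n F (h v - c) = h v - c" and radius_H: "edist n (h v) c = r2"
    if "v \<in> verts H" for v
    using frames(2) radii(2) that by blast+
  have r1: "0 < r1" by (rule sphere_radius_pos[OF g two_G c radius_G])
  have r2: "0 < r2" by (rule sphere_radius_pos[OF h two_H c radius_H])
  from r12 have "r1 < 1" and "r2 < 1"
    using lt_1_if_sum_squares_eq_1[of r1 r2] lt_1_if_sum_squares_eq_1[of r2 r1] r1 r2
    by (simp_all add: add.commute)
  moreover have "spherical_embedding G (card E) r1"
    by (rule spherical_embedding_in_frame[OF G g c E frame_G radius_G])
  moreover have "spherical_embedding H (card F) r2"
    by (rule spherical_embedding_in_frame[OF H h c F frame_H radius_H])
  moreover have "card E + card F \<le> n"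
    using EF by (rule orthonormal_Un_card_le[OF E F])
  ultimately show ?thesis using r1 r2 r12 by blast
qed

section \<open>Joining two spherical embeddings\<close>

lemma edist_sq_eq_sum: "(edist n x y)\<^sup>2 = (\<Sum>i<n. (x i - y i)\<^sup>2)"
  unfolding edist_def by (simp add: sum_nonneg)

lemma edist_translate: "edist n (x - c) (y - c) = edist n x y"
  unfolding edist_def by simp

lemma seg_translate: "x - c \<in> seg (y - c) (z - c) \<longleftrightarrow> x \<in> seg y z"
  unfolding seg_iff affine_comb_minus[symmetric] by simp

lemma unit_embedding_translate:
  assumes f: "unit_embedding G k f" and c: "c \<in> Rn k"
  shows "unit_embedding G k (\<lambda>v. f v - c)"
  using assms unfolding unit_embedding_def inj_on_def
  by (auto simp: edist_translate seg_translate intro: Rn_diff)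

lemma spherical_embedding_centered:
  assumes "spherical_embedding G k r"
  obtains f where "unit_embedding G k f" and "\<And>v. v \<in> verts G \<Longrightarrow> edist k (f v) 0 = r"
proof -
  obtain f c where "unit_embedding G k f" "c \<in> Rn k" "\<forall>v\<in>verts G. edist k (f v) c = r"
    using assms unfolding spherical_embedding_def by blast
  moreover have "edist k (f v - c) 0 = edist k (f v) c" for v
    using edist_translate[of k "f v" c c] by simp
  ultimately show ?thesis by (intro that[of "\<lambda>v. f v - c"]) (simp_all add: unit_embedding_translate)
qed

definition append_vec :: "nat \<Rightarrow> (nat \<Rightarrow> real) \<Rightarrow> (nat \<Rightarrow> real) \<Rightarrow> nat \<Rightarrow> real" where
  "append_vec k x y = (\<lambda>i. if i < k then x i else y (i - k))"

lemma append_vec_in_Rn: "y \<in> Rn m \<Longrightarrow> append_vec k x y \<in> Rn (k + m)"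
  unfolding append_vec_def Rn_def by auto

lemma sum_lessThan_add:
  fixes f :: "nat \<Rightarrow> 'a::comm_monoid_add"
  shows "(\<Sum>i<k + m. f i) = (\<Sum>i<k. f i) + (\<Sum>j<m. f (k + j))"
  by (induction m) (simp_all add: add.assoc)

lemma edist_append_vec:
  "(edist (k + m) (append_vec k x y) (append_vec k x' y'))\<^sup>2 = (edist k x x')\<^sup>2 + (edist m y y')\<^sup>2"
  unfolding edist_sq_eq_sum sum_lessThan_add by (simp add: append_vec_def)

lemma append_vec_eq_iff:
  assumes "x \<in> Rn k" and "x' \<in> Rn k"
  shows "append_vec k x y = append_vec k x' y' \<longleftrightarrow> x = x' \<and> y = y'"
proof
  assume eq: "append_vec k x y = append_vec k x' y'"
  have "x i = x' i" for i
    using fun_cong[OF eq, of i] assms by (cases "i < k") (auto simp: append_vec_def Rn_def)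
  moreover have "y j = y' j" for j
    using fun_cong[OF eq, of "k + j"] by (simp add: append_vec_def)
  ultimately show "x = x' \<and> y = y'" by auto
qed simp

lemma append_vec_in_seg:
  assumes "x \<in> Rn k" and "x1 \<in> Rn k" and "x2 \<in> Rn k"
    and "append_vec k x y \<in> seg (append_vec k x1 y1) (append_vec k x2 y2)"
  obtains t where "0 \<le> t" and "t \<le> 1"
    and "x = (\<lambda>i. (1 - t) * x1 i + t * x2 i)" and "y = (\<lambda>i. (1 - t) * y1 i + t * y2 i)"
proof -
  obtain t where t: "0 \<le> t" "t \<le> 1"
    and "append_vec k x y = append_vec k (\<lambda>i. (1 - t) * x1 i + t * x2 i) (\<lambda>i. (1 - t) * y1 i + t * y2 i)"
    using assms(4) unfolding seg_iff by (auto simp: append_vec_def fun_eq_iff)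
  moreover have "(\<lambda>i. (1 - t) * x1 i + t * x2 i) \<in> Rn k"
    using assms(2,3) by (simp add: Rn_def)
  ultimately show ?thesis using that assms(1) by (simp add: append_vec_eq_iff)
qed

definition join_embedding ::
    "nat \<Rightarrow> ('a \<Rightarrow> nat \<Rightarrow> real) \<Rightarrow> ('b \<Rightarrow> nat \<Rightarrow> real) \<Rightarrow> 'a + 'b \<Rightarrow> nat \<Rightarrow> real" where
  "join_embedding k f g = case_sum (\<lambda>u. append_vec k (f u) 0) (\<lambda>v. append_vec k 0 (g v))"

lemma edist_eq_1_iff_sq: "edist n x y = 1 \<longleftrightarrow> (edist n x y)\<^sup>2 = 1"
  using edist_nonneg[of n x y] by (auto simp: power2_eq_1_iff)

lemma join_embedding_inj:
  assumes f1: "unit_embedding G k1 f1" and f2: "unit_embedding H k2 f2"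
    and nonzero: "\<And>u. u \<in> verts G \<Longrightarrow> f1 u \<noteq> 0"
  shows "inj_on (join_embedding k1 f1 f2) (verts (graph_sum G H))"
proof (rule inj_onI)
  have inj: "inj_on f1 (verts G)" "inj_on f2 (verts H)"
    using f1 f2 by (simp_all add: unit_embedding_def)
  fix x y
  assume "x \<in> verts (graph_sum G H)" and "y \<in> verts (graph_sum G H)"
    and "join_embedding k1 f1 f2 x = join_embedding k1 f1 f2 y"
  with f1 f2 nonzero show "x = y"
    unfolding verts_graph_sum join_embedding_def
    by (auto simp: append_vec_eq_iff unit_embedding_in_Rn dest: inj_onD[OF inj(1)] inj_onD[OF inj(2)])
qed

lemma join_embedding_unit_edges:
  assumes G: "simple_graph G" and H: "simple_graph H"
    and f1: "unit_embedding G k1 f1" and f2: "unit_embedding H k2 f2"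
    and radius1: "\<And>u. u \<in> verts G \<Longrightarrow> edist k1 (f1 u) 0 = r1"
    and radius2: "\<And>v. v \<in> verts H \<Longrightarrow> edist k2 (f2 v) 0 = r2"
    and r12: "r1\<^sup>2 + r2\<^sup>2 = 1"
    and uv: "{u, v} \<in> edges (graph_sum G H)"
  shows "edist (k1 + k2) (join_embedding k1 f1 f2 u) (join_embedding k1 f1 f2 v) = 1"
  using G H uv
proof (cases rule: graph_sum_edgeE)
  case (left a b)
  with f1 show ?thesis
    by (simp add: edist_eq_1_iff_sq join_embedding_def edist_append_vec unit_embedding_def)
next
  case (right a b)
  with f2 show ?thesis
    by (simp add: edist_eq_1_iff_sq join_embedding_def edist_append_vec unit_embedding_def)
next
  case (cross a b)
  then have "(u = Inl a \<and> v = Inr b) \<or> (u = Inr b \<and> v = Inl a)"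
    by (simp add: doubleton_eq_iff)
  with cross r12 show ?thesis
    by (auto simp: edist_eq_1_iff_sq join_embedding_def edist_append_vec radius1 radius2
        edist_commute[of k1 0] edist_commute[of k2 0])
qed

lemma join_embedding_seg_left:
  assumes f1: "unit_embedding G k1 f1"
    and nonzero2: "\<And>v. v \<in> verts H \<Longrightarrow> f2 v \<noteq> 0"
    and ab: "{a, b} \<in> edges G" "a \<in> verts G" "b \<in> verts G"
    and w: "w \<in> verts (graph_sum G H)"
    and in_seg: "join_embedding k1 f1 f2 w \<in>
      seg (join_embedding k1 f1 f2 (Inl a)) (join_embedding k1 f1 f2 (Inl b))"
  shows "w = Inl a \<or> w = Inl b"
  using w unfolding verts_graph_sum
proof (elim UnE imageE)
  fix d assume d: "d \<in> verts G" "w = Inl d"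
  with in_seg have "append_vec k1 (f1 d) 0 \<in> seg (append_vec k1 (f1 a) 0) (append_vec k1 (f1 b) 0)"
    by (simp add: join_embedding_def)
  then obtain t where "0 \<le> t" "t \<le> 1" "f1 d = (\<lambda>i. (1 - t) * f1 a i + t * f1 b i)"
    using append_vec_in_seg[OF unit_embedding_in_Rn[OF f1 d(1)] unit_embedding_in_Rn[OF f1 ab(2)] unit_embedding_in_Rn[OF f1 ab(3)]] by blast
  then have "f1 d \<in> seg (f1 a) (f1 b)" unfolding seg_iff by blast
  with f1 ab d show ?thesis unfolding unit_embedding_def by blast
next
  fix d assume d: "d \<in> verts H" "w = Inr d"
  with in_seg have "append_vec k1 0 (f2 d) \<in> seg (append_vec k1 (f1 a) 0) (append_vec k1 (f1 b) 0)"
    by (simp add: join_embedding_def)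
  then obtain t where "f2 d = (\<lambda>i. (1 - t) * 0 i + t * 0 i)"
    using append_vec_in_seg[OF zero_in_Rn unit_embedding_in_Rn[OF f1 ab(2)] unit_embedding_in_Rn[OF f1 ab(3)]] by blast
  with nonzero2 d show ?thesis by (simp add: zero_fun_def)
qed

lemma join_embedding_seg_right:
  assumes f1: "unit_embedding G k1 f1" and f2: "unit_embedding H k2 f2"
    and nonzero1: "\<And>u. u \<in> verts G \<Longrightarrow> f1 u \<noteq> 0"
    and ab: "{a, b} \<in> edges H" "a \<in> verts H" "b \<in> verts H"
    and w: "w \<in> verts (graph_sum G H)"
    and in_seg: "join_embedding k1 f1 f2 w \<in>
      seg (join_embedding k1 f1 f2 (Inr a)) (join_embedding k1 f1 f2 (Inr b))"
  shows "w = Inr a \<or> w = Inr b"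
  using w unfolding verts_graph_sum
proof (elim UnE imageE)
  fix d assume d: "d \<in> verts G" "w = Inl d"
  with in_seg have "append_vec k1 (f1 d) 0 \<in> seg (append_vec k1 0 (f2 a)) (append_vec k1 0 (f2 b))"
    by (simp add: join_embedding_def)
  then obtain t where "f1 d = (\<lambda>i. (1 - t) * 0 i + t * 0 i)"
    using append_vec_in_seg[OF unit_embedding_in_Rn[OF f1 d(1)] zero_in_Rn zero_in_Rn] by blast
  with nonzero1 d show ?thesis by (simp add: zero_fun_def)
next
  fix d assume d: "d \<in> verts H" "w = Inr d"
  with in_seg have "append_vec k1 0 (f2 d) \<in> seg (append_vec k1 0 (f2 a)) (append_vec k1 0 (f2 b))"
    by (simp add: join_embedding_def)
  then obtain t where "0 \<le> t" "t \<le> 1" "f2 d = (\<lambda>i. (1 - t) * f2 a i + t * f2 b i)"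
    using append_vec_in_seg[OF zero_in_Rn zero_in_Rn zero_in_Rn] by blast
  then have "f2 d \<in> seg (f2 a) (f2 b)" unfolding seg_iff by blast
  with f2 ab d show ?thesis unfolding unit_embedding_def by blast
qed

text \<open>On a segment from a vertex of \<open>G\<close> to a vertex of \<open>H\<close> each of the two blocks of
  coordinates is a multiple of a nonzero vector, which pins down the segment parameter.\<close>
lemma join_embedding_seg_cross:
  assumes f1: "unit_embedding G k1 f1" and f2: "unit_embedding H k2 f2"
    and nonzero1: "\<And>u. u \<in> verts G \<Longrightarrow> f1 u \<noteq> 0"
    and nonzero2: "\<And>v. v \<in> verts H \<Longrightarrow> f2 v \<noteq> 0"
    and ab: "a \<in> verts G" "b \<in> verts H"
    and w: "w \<in> verts (graph_sum G H)"
    and in_seg: "join_embedding k1 f1 f2 w \<in>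
      seg (join_embedding k1 f1 f2 (Inl a)) (join_embedding k1 f1 f2 (Inr b))"
  shows "w = Inl a \<or> w = Inr b"
proof -
  have inj: "inj_on f1 (verts G)" "inj_on f2 (verts H)"
    using f1 f2 by (simp_all add: unit_embedding_def)
  have scale_eq_0: "t = 0" if "\<forall>i. t * x i = 0" and "x \<noteq> 0" for t :: real and x :: "nat \<Rightarrow> real"
    using that by (auto simp: fun_eq_iff)
  show ?thesis
    using w unfolding verts_graph_sum
  proof (elim UnE imageE)
    fix d assume d: "d \<in> verts G" "w = Inl d"
    with in_seg have "append_vec k1 (f1 d) 0 \<in> seg (append_vec k1 (f1 a) 0) (append_vec k1 0 (f2 b))"
      by (simp add: join_embedding_def)
    then obtain t where "f1 d = (\<lambda>i. (1 - t) * f1 a i + t * 0 i)"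
      and "0 = (\<lambda>i. (1 - t) * 0 i + t * f2 b i)"
      using append_vec_in_seg[OF unit_embedding_in_Rn[OF f1 d(1)] unit_embedding_in_Rn[OF f1 ab(1)] zero_in_Rn] by blast
    with scale_eq_0[of t "f2 b"] nonzero2[OF ab(2)] have "f1 d = f1 a"
      by (simp add: fun_eq_iff)
    with inj d ab show ?thesis by (auto dest: inj_onD)
  next
    fix d assume d: "d \<in> verts H" "w = Inr d"
    with in_seg have "append_vec k1 0 (f2 d) \<in> seg (append_vec k1 (f1 a) 0) (append_vec k1 0 (f2 b))"
      by (simp add: join_embedding_def)
    then obtain t where "0 = (\<lambda>i. (1 - t) * f1 a i + t * 0 i)"
      and "f2 d = (\<lambda>i. (1 - t) * 0 i + t * f2 b i)"
      using append_vec_in_seg[OF zero_in_Rn unit_embedding_in_Rn[OF f1 ab(1)] zero_in_Rn] by blast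
    with scale_eq_0[of "1 - t" "f1 a"] nonzero1[OF ab(1)] have "f2 d = f2 b"
      by (simp add: fun_eq_iff)
    with inj d ab show ?thesis by (auto dest: inj_onD)
  qed
qed

lemma unit_embedding_join:
  assumes G: "simple_graph G" and H: "simple_graph H"
    and f1: "unit_embedding G k1 f1" and f2: "unit_embedding H k2 f2"
    and radius1: "\<And>u. u \<in> verts G \<Longrightarrow> edist k1 (f1 u) 0 = r1"
    and radius2: "\<And>v. v \<in> verts H \<Longrightarrow> edist k2 (f2 v) 0 = r2"
    and r1: "0 < r1" and r2: "0 < r2" and r12: "r1\<^sup>2 + r2\<^sup>2 = 1"
  shows "unit_embedding (graph_sum G H) (k1 + k2) (join_embedding k1 f1 f2)"
  unfolding unit_embedding_def
proof (intro conjI allI impI)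
  have nonzero1: "f1 u \<noteq> 0" if "u \<in> verts G" for u
    using radius1[OF that] r1 by auto
  have nonzero2: "f2 v \<noteq> 0" if "v \<in> verts H" for v
    using radius2[OF that] r2 by auto
  show "join_embedding k1 f1 f2 ` verts (graph_sum G H) \<subseteq> Rn (k1 + k2)"
    unfolding verts_graph_sum join_embedding_def
    using unit_embedding_in_Rn[OF f2] by (auto intro!: append_vec_in_Rn)
  show "inj_on (join_embedding k1 f1 f2) (verts (graph_sum G H))"
    by (rule join_embedding_inj[OF f1 f2 nonzero1])
  fix u v assume uv: "{u, v} \<in> edges (graph_sum G H)"
  then show "edist (k1 + k2) (join_embedding k1 f1 f2 u) (join_embedding k1 f1 f2 v) = 1"
    using join_embedding_unit_edges[OF G H f1 f2 radius1 radius2 r12] by blast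
  fix w assume w: "w \<in> verts (graph_sum G H)" "w \<noteq> u" "w \<noteq> v"
  show "join_embedding k1 f1 f2 w \<notin> seg (join_embedding k1 f1 f2 u) (join_embedding k1 f1 f2 v)"
  proof
    assume in_seg: "join_embedding k1 f1 f2 w \<in> seg (join_embedding k1 f1 f2 u) (join_embedding k1 f1 f2 v)"
    from G H uv show False
    proof (cases rule: graph_sum_edgeE)
      case (left a b)
      with join_embedding_seg_left[where ?f2.0 = f2, OF f1 nonzero2 _ _ _ w(1)] edge_in_verts[OF G] in_seg w
      show False by blast
    next
      case (right a b)
      with join_embedding_seg_right[OF f1 f2 nonzero1 _ _ _ w(1)] edge_in_verts[OF H] in_seg w
      show False by blast
    next
      case (cross a b)
      then have "(u = Inl a \<and> v = Inr b) \<or> (u = Inr b \<and> v = Inl a)"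
        by (simp add: doubleton_eq_iff)
      with join_embedding_seg_cross[OF f1 f2 nonzero1 nonzero2 cross(1,2) w(1)] in_seg w
      show False by (auto simp: seg_commute)
    qed
  qed
qed

lemma graph_dim_graph_sum_le:
  assumes G: "simple_graph G" and H: "simple_graph H"
    and "spherical_embedding G k1 r1" and "spherical_embedding H k2 r2"
    and "0 < r1" and "0 < r2" and "r1\<^sup>2 + r2\<^sup>2 = 1"
  shows "graph_dim (graph_sum G H) \<le> k1 + k2"
proof -
  obtain f1 where "unit_embedding G k1 f1" "\<And>u. u \<in> verts G \<Longrightarrow> edist k1 (f1 u) 0 = r1"
    using spherical_embedding_centered[OF assms(3)] by blast
  moreover obtain f2 where "unit_embedding H k2 f2" "\<And>v. v \<in> verts H \<Longrightarrow> edist k2 (f2 v) 0 = r2"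
    using spherical_embedding_centered[OF assms(4)] by blast
  ultimately have "unit_embedding (graph_sum G H) (k1 + k2) (join_embedding k1 f1 f2)"
    using unit_embedding_join[OF G H] assms(5-7) by blast
  then show ?thesis unfolding graph_dim_def by (blast intro: Least_le)
qed

text \<open>The vertices of a regular simplex with unit edges: the scaled standard basis
  vectors \<open>e\<^sub>i / sqrt 2\<close>.\<close>
lemma unit_embedding_exists:
  assumes G: "simple_graph G"
  shows "\<exists>n f. unit_embedding G n f"
proof -
  let ?N = "card (verts G)"
  obtain h where h: "bij_betw h (verts G) {..<?N}"
    using G ex_bij_betw_finite_nat[of "verts G"]
    unfolding simple_graph_def lessThan_atLeast0 by blast
  then have h_lt: "h v < ?N" if "v \<in> verts G" for v
    using that by (auto simp: bij_betw_def)
  have h_inj: "h u = h v \<longleftrightarrow> u = v" if "u \<in> verts G" "v \<in> verts G" for u v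
    using h that by (auto simp: bij_betw_def inj_on_def)
  define s where "s = sqrt (1 / 2 :: real)"
  have s2: "s * s = 1 / 2" and s_nonzero: "s \<noteq> 0"
    by (simp_all add: s_def)
  define f where "f v = (\<lambda>i. if i = h v then s else 0)" for v
  have "unit_embedding G ?N f"
    unfolding unit_embedding_def
  proof (intro conjI allI impI)
    show "f ` verts G \<subseteq> Rn ?N"
      using h_lt by (force simp: f_def Rn_def)
    show "inj_on f (verts G)"
      using s_nonzero h_inj by (intro inj_onI) (metis f_def)
    fix u v assume "{u, v} \<in> edges G"
    then have u: "u \<in> verts G" and v: "v \<in> verts G" and "u \<noteq> v"
      using G unfolding simple_graph_def by (fastforce simp: card_2_iff doubleton_eq_iff)+
    then have huv: "h u \<noteq> h v" using h_inj by blast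
    have "(f u i - f v i)\<^sup>2 = (if i = h u then 1 / 2 else 0) + (if i = h v then 1 / 2 else 0)" for i
      using huv s2 by (auto simp: f_def power2_eq_square)
    then show "edist ?N (f u) (f v) = 1"
      using h_lt[OF u] h_lt[OF v] by (simp add: edist_def sum.distrib)
    fix w assume "w \<in> verts G" "w \<noteq> u" "w \<noteq> v"
    then have "h w \<noteq> h u" "h w \<noteq> h v" using h_inj u v by blast+
    show "f w \<notin> seg (f u) (f v)"
    proof
      assume "f w \<in> seg (f u) (f v)"
      then obtain t where "\<forall>i. f w i = (1 - t) * f u i + t * f v i"
        unfolding seg_def by blast
      from this[rule_format, of "h w"] show False
        using \<open>h w \<noteq> h u\<close> \<open>h w \<noteq> h v\<close> s_nonzero by (simp add: f_def)
    qed
  qed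
  then show ?thesis by blast
qed

lemma unit_embedding_graph_dim:
  "simple_graph G \<Longrightarrow> \<exists>f. unit_embedding G (graph_dim G) f"
  unfolding graph_dim_def using unit_embedding_exists by (rule LeastI_ex)

lemma sdim_le: "spherical_embedding G k r \<Longrightarrow> r < 1 \<Longrightarrow> sdim G \<le> k"
  unfolding sdim_def by (blast intro: Least_le)

theorem mainTheorem5:
  fixes G :: "'a graph" and H :: "'b graph"
  assumes "simple_graph G" and "simple_graph H"
    and "card (verts G) \<ge> 2" and "card (verts H) \<ge> 2"
  shows "((\<exists>r1 r2. 0 < r1 \<and> r1 < 1 \<and> 0 < r2 \<and> r2 < 1 \<and> r1^2 + r2^2 = 1 \<and>
              spherical_embedding G (sdim G) r1 \<and> spherical_embedding H (sdim H) r2)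
           \<longrightarrow> graph_dim (graph_sum G H) = sdim G + sdim H)
       \<and> ((\<not> (\<exists>r1 r2. 0 < r1 \<and> r1 < 1 \<and> 0 < r2 \<and> r2 < 1 \<and> r1^2 + r2^2 = 1 \<and>
              spherical_embedding G (sdim G) r1 \<and> spherical_embedding H (sdim H) r2))
           \<longrightarrow> graph_dim (graph_sum G H) > sdim G + sdim H)"
    (is "(?radii \<longrightarrow> _) \<and> (\<not> ?radii \<longrightarrow> _)")
proof -
  let ?S = "graph_sum G H"
  obtain f where "unit_embedding ?S (graph_dim ?S) f"
    using unit_embedding_graph_dim[OF simple_graph_graph_sum[OF assms(1,2)]] by blast
  then obtain k1 k2 r1 r2 where k: "k1 + k2 \<le> graph_dim ?S"
    and r: "0 < r1" "r1 < 1" "0 < r2" "r2 < 1" "r1\<^sup>2 + r2\<^sup>2 = 1"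
    and sph: "spherical_embedding G k1 r1" "spherical_embedding H k2 r2"
    using graph_sum_embedding_splits[OF assms] by blast
  have sdim: "sdim G \<le> k1" "sdim H \<le> k2"
    using sdim_le sph r by blast+
  show ?thesis
  proof (intro conjI impI)
    assume ?radii
    then have "graph_dim ?S \<le> sdim G + sdim H"
      using graph_dim_graph_sum_le[OF assms(1,2)] by blast
    with k sdim show "graph_dim ?S = sdim G + sdim H" by linarith
  next
    assume no_radii: "\<not> ?radii"
    show "graph_dim ?S > sdim G + sdim H"
    proof (rule ccontr)
      assume "\<not> graph_dim ?S > sdim G + sdim H"
      with k sdim have "k1 = sdim G" "k2 = sdim H" by linarith+
      with r sph no_radii show False by blast
    qed
  qed
qed

end
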